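(* Let $\Omega\subset\mathbb{R}^2$ be a connected open set. Let $\Phi(x^1,x^2;\lambda)$ be an invertible $n\times n$ matrix function, smooth in $(x^1,x^2)$ and holomorphic in $\lambda$ near $\lambda_i$ with $\Phi(x;\lambda_i)$ invertible. Let $T(x^1,x^2;\lambda)=\sum_{j=0}^N C_j(x^1,x^2)\lambda^j$ be a matrix polynomial in $\lambda$ with smooth coefficients, such that $\lambda_i$ (a constant) is a simple zero of $\lambda\mapsto\det T(x;\lambda)$ for every $x\in\Omega$. Put $\tilde\Phi=T\Phi$ and suppose that there are matrix functions $\tilde U_k(x;\lambda)$, $k=1,2$, holomorphic in $\lambda$ in a neighbourhood of $\lambda_i$, with $\tilde\Phi_{,k}=\tilde U_k\tilde\Phi$. Then there exists a constant vector $p_i\in\mathbb{C}^n$, $p_i\neq 0$, such that $\tilde\Phi(x;\lambda_i)p_i=0$ and $\tilde\Phi_{,k}(x;\lambda_i)p_i=0$ for $k=1,2$ and all $x\in\Omega$.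
   Context: $f_{,k}$ denotes $\partial f/\partial x^k$ with $(x^1,x^2)\in\Omega$. *)

theory Defs
  imports "HOL-Analysis.Analysis"
begin

definition partial_d :: "2 \<Rightarrow> (real^2 \<Rightarrow> 'b::real_normed_vector) \<Rightarrow> real^2 \<Rightarrow> 'b" where
  "partial_d k f x = vector_derivative (\<lambda>t. f (x + t *\<^sub>R axis k 1)) (at 0)"

fun iter_partial :: "2 list \<Rightarrow> (real^2 \<Rightarrow> 'b::real_normed_vector) \<Rightarrow> real^2 \<Rightarrow> 'b" where
  "iter_partial [] f = f"
| "iter_partial (k # ks) f = partial_d k (iter_partial ks f)"

definition smooth_on :: "(real^2) set \<Rightarrow> (real^2 \<Rightarrow> 'b::real_normed_vector) \<Rightarrow> bool" where
  "smooth_on \<Omega> f \<longleftrightarrow>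
     (\<forall>ks. continuous_on \<Omega> (iter_partial ks f) \<and>
        (\<forall>x\<in>\<Omega>. \<forall>k. (\<lambda>t. iter_partial ks f (x + t *\<^sub>R axis k 1)) differentiable (at 0)))"

definition mat_holomorphic_on :: "(complex \<Rightarrow> complex^'n^'n) \<Rightarrow> complex set \<Rightarrow> bool" where
  "mat_holomorphic_on F S \<longleftrightarrow> (\<forall>a b. (\<lambda>l. F l $ a $ b) holomorphic_on S)"

definition mat_poly :: "nat \<Rightarrow> (nat \<Rightarrow> complex^'n^'n) \<Rightarrow> complex \<Rightarrow> complex^'n^'n" where
  "mat_poly N C l = (\<chi> a b. \<Sum>j\<le>N. C j $ a $ b * l ^ j)"

end

theory Submission
  imports Defs
begin

text \<open>At \<open>\<lambda> = \<lambda>\<^sub>i\<close> the matrix \<open>M(x) = T(x,\<lambda>\<^sub>i) \<Phi>(x,\<lambda>\<^sub>i)\<close> is singular and its kernel is a line: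
  two independent kernel vectors of \<open>T(x,\<lambda>\<^sub>i)\<close> would make \<open>\<lambda>\<^sub>i\<close> a zero of order at least two of
  \<open>det T(x,\<cdot>)\<close>, and \<open>\<Phi>\<close> is invertible. Near any point the line is spanned by a column \<open>Q\<close> of
  the adjugate of \<open>M\<close>. Differentiating \<open>M Q = 0\<close> and using \<open>M\<^sub>,\<^sub>k = U\<^sub>k M\<close> gives \<open>M Q\<^sub>,\<^sub>k = 0\<close>,
  so \<open>Q\<^sub>,\<^sub>k\<close> is parallel to \<open>Q\<close> and the line does not move. On the connected set \<open>\<Omega>\<close> the kernel
  is therefore one fixed line; a spanning vector \<open>p\<close> satisfies \<open>M p = 0\<close> and
  \<open>M\<^sub>,\<^sub>k p = U\<^sub>k M p = 0\<close>.\<close>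

section \<open>Linear algebra\<close>

lemma det_eq_0_iff_nontrivial_kernel:
  fixes A :: "'a::field^'n^'n"
  shows "det A = 0 \<longleftrightarrow> (\<exists>p. p \<noteq> 0 \<and> A *v p = 0)"
proof -
  have "det A \<noteq> 0 \<longleftrightarrow> inj ((*v) A)"
    using det_nz_iff_inj_gen[of "(*v) A"] by simp
  also have "\<dots> \<longleftrightarrow> (\<forall>p. A *v p = 0 \<longrightarrow> p = 0)"
    unfolding inj_def by (metis eq_iff_diff_eq_0 matrix_vector_mult_diff_distrib matrix_vector_mult_0_right)
  finally show ?thesis by blast
qed

definition kernel_dim_le_1 :: "'a::field^'n^'n \<Rightarrow> bool" where
  "kernel_dim_le_1 A \<longleftrightarrow> (\<forall>p v. A *v p = 0 \<longrightarrow> p \<noteq> 0 \<longrightarrow> A *v v = 0 \<longrightarrow> (\<exists>c. v = c *s p))"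

lemma kernel_dim_le_1_mult_invertible:
  fixes A B :: "'a::field^'n^'n"
  assumes "kernel_dim_le_1 A" and "invertible B"
  shows "kernel_dim_le_1 (A ** B)"
  unfolding kernel_dim_le_1_def
proof (intro allI impI)
  fix p v assume "(A ** B) *v p = 0" "p \<noteq> 0" "(A ** B) *v v = 0"
  obtain B' where B': "B' ** B = mat 1" using \<open>invertible B\<close> unfolding invertible_def by blast
  then have B_cancel: "B' *v (B *v x) = x" for x
    by (simp add: matrix_vector_mul_assoc)
  have "B *v p \<noteq> 0" using \<open>p \<noteq> 0\<close> B_cancel[of p] by auto
  then obtain c where "B *v v = c *s (B *v p)"
    using assms(1) \<open>(A ** B) *v p = 0\<close> \<open>(A ** B) *v v = 0\<close>
    unfolding kernel_dim_le_1_def by (metis matrix_vector_mul_assoc)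
  then have "B' *v (B *v v) = B' *v (B *v (c *s p))" by (simp add: vector_scalar_commute)
  then show "\<exists>c. v = c *s p" by (metis B_cancel)
qed

definition adjugate_col :: "'a::comm_ring_1^'n^'n \<Rightarrow> 'n \<Rightarrow> 'a^'n" where
  "adjugate_col A j = (\<chi> k. det (\<chi> i. if i = j then axis k 1 else A $ i))"

lemma matrix_vector_mult_adjugate_col:
  fixes A :: "'a::comm_ring_1^'n^'n"
  shows "A *v adjugate_col A j = det A *s axis j 1"
proof -
  have "(A *v adjugate_col A j) $ r = (det A *s axis j 1) $ r" for r
  proof -
    have "(A *v adjugate_col A j) $ r
        = (\<Sum>k\<in>UNIV. det (\<chi> i. if i = j then A$r$k *s axis k 1 else A $ i))"
      by (simp add: matrix_vector_mult_def adjugate_col_def det_row_mul)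
    also have "\<dots> = det (\<chi> i. if i = j then (\<Sum>k\<in>UNIV. A$r$k *s axis k 1) else A $ i)"
      by (rule det_linear_row_sum[symmetric]) simp
    also have "\<dots> = det (\<chi> i. if i = j then A $ r else A $ i)"
      by (simp only: basis_expansion)
    also have "\<dots> = (det A *s axis j 1) $ r"
    proof (cases "r = j")
      case True
      then have "(\<chi> i. if i = j then A $ r else A $ i) = A" by (simp add: vec_eq_iff)
      then show ?thesis using True by (simp add: axis_def)
    next
      case False
      then have "det (\<chi> i. if i = j then A $ r else A $ i) = 0"
        by (intro det_identical_rows[of r j]) (auto simp: row_def vec_eq_iff)
      then show ?thesis using False by (simp add: axis_def)
    qed
    finally show ?thesis .
  qed
  then show ?thesis by (simp add: vec_eq_iff)
qed

lemma sum_mult_matrix_vector: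
  fixes A :: "'a::comm_semiring_1^'n^'m"
  shows "(\<Sum>i\<in>UNIV. c $ i * (A *v z) $ i) = (\<Sum>l\<in>UNIV. (c v* A) $ l * z $ l)"
  by (simp add: matrix_vector_mult_def vector_matrix_mult_def sum_distrib_left sum_distrib_right
      mult_ac) (rule sum.swap)

text \<open>If \<open>p\<^sub>a \<noteq> 0\<close> for a kernel vector \<open>p\<close> and \<open>c\<^sub>j \<noteq> 0\<close> for a left kernel vector \<open>c\<close>, then
  replacing row \<open>j\<close> of \<open>A\<close> by \<open>e\<^sub>a\<close> gives an invertible matrix.\<close>
lemma adjugate_col_nonzero:
  fixes A :: "'a::field^'n^'n"
  assumes "det A = 0" and "kernel_dim_le_1 A"
  shows "\<exists>j a. adjugate_col A j $ a \<noteq> 0"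
proof -
  obtain p where p: "p \<noteq> 0" "A *v p = 0"
    using assms(1) det_eq_0_iff_nontrivial_kernel by blast
  then obtain a where "p $ a \<noteq> 0" by (auto simp: vec_eq_iff)
  have "det (transpose A) = 0" using assms(1) by simp
  then obtain c where c: "c \<noteq> 0" "c v* A = 0"
    using det_eq_0_iff_nontrivial_kernel by (metis transpose_matrix_vector)
  then obtain j where "c $ j \<noteq> 0" by (auto simp: vec_eq_iff)
  let ?N = "(\<chi> i. if i = j then axis a 1 else A $ i) :: 'a^'n^'n"
  have "det ?N \<noteq> 0"
    unfolding det_eq_0_iff_nontrivial_kernel
  proof clarify
    fix z assume z: "?N *v z = 0" "z \<noteq> 0"
    have other_rows: "(A *v z) $ i = 0" if "i \<noteq> j" for i
    proof -
      have "(A *v z) $ i = (?N *v z) $ i" using that by (simp add: matrix_vector_mult_def)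
      then show ?thesis using z(1) by simp
    qed
    have "(\<Sum>i\<in>UNIV. c $ i * (A *v z) $ i) = 0"
      using c(2) by (simp add: sum_mult_matrix_vector)
    moreover have "(\<Sum>i\<in>UNIV. c $ i * (A *v z) $ i) = c $ j * (A *v z) $ j"
      using other_rows by (subst sum.remove[of _ j]) (auto intro!: sum.neutral)
    ultimately have "A *v z = 0"
      using other_rows \<open>c $ j \<noteq> 0\<close> by (metis mult_eq_0_iff vec_eq_iff zero_index)
    then obtain \<mu> where "z = \<mu> *s p"
      using assms(2) p unfolding kernel_dim_le_1_def by blast
    moreover have "z $ a = 0"
      using arg_cong[OF z(1), of "\<lambda>v. v $ j"]
      by (simp add: matrix_vector_mult_def axis_def if_distrib[of "\<lambda>x. x * _"] cong: if_cong)
    ultimately show False using z(2) \<open>p $ a \<noteq> 0\<close> by simp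
  qed
  then show ?thesis unfolding adjugate_col_def by auto
qed

lemma kernel_eq_line:
  fixes A :: "'a::field^'n^'n"
  assumes "kernel_dim_le_1 A" "A *v q = 0" "q \<noteq> 0"
  shows "{p. A *v p = 0} = range (\<lambda>c. c *s q)"
  using assms unfolding kernel_dim_le_1_def by (auto simp: vector_scalar_commute image_iff)

section \<open>Simple zeros of determinants\<close>

lemma has_field_derivative_prod_two_zeros:
  assumes "finite A" "i1 \<in> A" "i2 \<in> A" "i1 \<noteq> i2" "f i1 z = 0" "f i2 z = 0"
    and "\<And>i. i \<in> A \<Longrightarrow> (f i has_field_derivative f' i) (at z)"
  shows "((\<lambda>u. \<Prod>i\<in>A. f i u) has_field_derivative 0) (at z)"
proof -
  have "(\<Prod>y\<in>A - {i}. f y z) = 0" for i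
    using assms(1-6) by (cases "i = i1") (auto intro!: prod_zero)
  then show ?thesis
    using has_field_derivative_prod[of A f f' z] assms(7) by simp
qed

lemma exists_invertible_with_columns:
  fixes p w :: "'a::field^'n"
  assumes "p \<noteq> 0" and "\<nexists>c. w = c *s p"
  shows "\<exists>Q a b c. a \<noteq> b \<and> det Q \<noteq> 0 \<and> column a Q = p \<and> column b Q = w - c *s p"
proof -
  obtain a where a: "p $ a \<noteq> 0" using assms(1) by (auto simp: vec_eq_iff)
  define w' where "w' = w - (w $ a / p $ a) *s p"
  have "w' $ a = 0" using a by (simp add: w'_def)
  have "w' \<noteq> 0" using assms(2) by (auto simp: w'_def)
  then obtain b where b: "w' $ b \<noteq> 0" by (auto simp: vec_eq_iff)
  with \<open>w' $ a = 0\<close> have "a \<noteq> b" by auto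
  define Q :: "'a^'n^'n" where
    "Q = (\<chi> r s. if s = a then p $ r else if s = b then w' $ r else mat 1 $ r $ s)"
  have Qx: "(Q *v x) $ r = p $ r * x $ a + w' $ r * x $ b + (if r \<noteq> a \<and> r \<noteq> b then x $ r else 0)"
    for x r
  proof -
    have "(Q *v x) $ r = (\<Sum>s\<in>UNIV. (if s = a then p $ r * x $ a else 0)
        + (if s = b then w' $ r * x $ b else 0) + (if s = r \<and> r \<noteq> a \<and> r \<noteq> b then x $ r else 0))"
      unfolding matrix_vector_mult_def vec_lambda_beta Q_def
      by (intro sum.cong) (use \<open>a \<noteq> b\<close> in \<open>auto simp: mat_def\<close>)
    then show ?thesis by (simp add: sum.distrib)
  qed
  have "det Q \<noteq> 0"
    unfolding det_eq_0_iff_nontrivial_kernel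
  proof clarify
    fix x assume "Q *v x = 0" "x \<noteq> 0"
    then have Qx0: "p $ r * x $ a + w' $ r * x $ b + (if r \<noteq> a \<and> r \<noteq> b then x $ r else 0) = 0" for r
      using Qx[of x r] by simp
    have "x $ a = 0" using Qx0[of a] \<open>w' $ a = 0\<close> a \<open>a \<noteq> b\<close> by simp
    moreover have "x $ b = 0" using Qx0[of b] \<open>x $ a = 0\<close> b \<open>a \<noteq> b\<close> by simp
    ultimately have "x $ r = 0" for r using Qx0[of r] by (cases "r = a \<or> r = b") auto
    then show False using \<open>x \<noteq> 0\<close> by (simp add: vec_eq_iff)
  qed
  moreover have "column a Q = p" "column b Q = w - (w $ a / p $ a) *s p"
    using \<open>a \<noteq> b\<close> by (simp_all add: column_def Q_def w'_def vec_eq_iff)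
  ultimately show ?thesis using \<open>a \<noteq> b\<close> by blast
qed

text \<open>If \<open>F z\<close> has a kernel of dimension at least two, then after a change of basis two columns of
  \<open>F\<close> vanish at \<open>z\<close>, and every term of the Leibniz expansion of the determinant contains
  an entry from each of them.\<close>
lemma has_field_derivative_det_zero_if_kernel_dim_ge_2:
  fixes F :: "'a::real_normed_field \<Rightarrow> 'a^'n^'n"
  assumes F: "\<And>i j. (\<lambda>l. F l $ i $ j) field_differentiable (at z)"
    and "F z *v p = 0" "F z *v w = 0" "p \<noteq> 0" "\<nexists>c. w = c *s p"
  shows "((\<lambda>l. det (F l)) has_field_derivative 0) (at z)"
proof -
  obtain Q a b c where Q: "a \<noteq> b" "det Q \<noteq> 0" "column a Q = p" "column b Q = w - c *s p"
    using exists_invertible_with_columns assms(4,5) by blast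
  define G where "G l = F l ** Q" for l
  have G_entry: "G l $ i $ s = (F l *v column s Q) $ i" for l i s
    by (simp add: G_def matrix_matrix_mult_def matrix_vector_mult_def column_def)
  have G_zero: "G z $ i $ a = 0" "G z $ i $ b = 0" for i
    using assms(2,3) Q(3,4)
    by (simp_all add: G_entry matrix_vector_mult_diff_distrib vector_scalar_commute)
  have G_diff: "((\<lambda>l. G l $ i $ s) has_field_derivative deriv (\<lambda>l. G l $ i $ s) z) (at z)" for i s
    unfolding G_entry matrix_vector_mult_def vec_lambda_beta
    by (intro DERIV_deriv_iff_field_differentiable[THEN iffD2] field_differentiable_sum
        field_differentiable_mult F field_differentiable_const)
  have "((\<lambda>l. det (G l)) has_field_derivative 0) (at z)"
    unfolding det_def
  proof (rule DERIV_sum[THEN DERIV_cong], rule DERIV_cmult)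
    fix \<sigma> :: "'n \<Rightarrow> 'n" assume "\<sigma> \<in> {\<sigma>. \<sigma> permutes UNIV}"
    then have "\<sigma> (inv \<sigma> a) = a" "\<sigma> (inv \<sigma> b) = b"
      by (simp_all add: permutes_inverses(1))
    moreover from this have "inv \<sigma> a \<noteq> inv \<sigma> b" using Q(1) by metis
    ultimately show "((\<lambda>l. \<Prod>i\<in>UNIV. G l $ i $ \<sigma> i) has_field_derivative 0) (at z)"
      using G_diff
      by (intro has_field_derivative_prod_two_zeros[of UNIV "inv \<sigma> a" "inv \<sigma> b"]) (simp_all add: G_zero)
  qed simp
  moreover have "det (F l) = det (G l) / det Q" for l
    using Q(2) by (simp add: G_def det_mul)
  ultimately show ?thesis
    using DERIV_cdivide[of "\<lambda>l. det (G l)" 0 z UNIV "det Q"] by simp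
qed

lemma kernel_dim_le_1_if_simple_zero:
  fixes F :: "'a::real_normed_field \<Rightarrow> 'a^'n^'n"
  assumes "\<And>i j. (\<lambda>l. F l $ i $ j) field_differentiable (at z)"
    and "deriv (\<lambda>l. det (F l)) z \<noteq> 0"
  shows "kernel_dim_le_1 (F z)"
  unfolding kernel_dim_le_1_def
proof (intro allI impI)
  fix p v assume "F z *v p = 0" "p \<noteq> 0" "F z *v v = 0"
  show "\<exists>c. v = c *s p"
  proof (rule ccontr)
    assume "\<nexists>c. v = c *s p"
    then have "((\<lambda>l. det (F l)) has_field_derivative 0) (at z)"
      using has_field_derivative_det_zero_if_kernel_dim_ge_2[OF assms(1)] \<open>F z *v p = 0\<close> \<open>p \<noteq> 0\<close> \<open>F z *v v = 0\<close>
      by blast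
    then show False using assms(2) DERIV_imp_deriv by blast
  qed
qed

section \<open>Calculus along coordinate axes\<close>

lemma bounded_bilinear_matrix_matrix_mult:
  "bounded_bilinear ((**) :: 'a::{euclidean_space,real_normed_algebra_1}^'n^'m \<Rightarrow> 'a^'k^'n \<Rightarrow> 'a^'k^'m)"
  unfolding bilinear_conv_bounded_bilinear[symmetric] bilinear_def linear_iff
  by (simp add: vec_eq_iff matrix_matrix_mult_def sum.distrib scaleR_sum_right distrib_left distrib_right)

lemma bounded_bilinear_matrix_vector_mult:
  "bounded_bilinear ((*v) :: 'a::{euclidean_space,real_normed_algebra_1}^'n^'m \<Rightarrow> 'a^'n \<Rightarrow> 'a^'m)"
  unfolding bilinear_conv_bounded_bilinear[symmetric] bilinear_def linear_iff
  by (simp add: vec_eq_iff matrix_vector_mult_def sum.distrib scaleR_sum_right distrib_left distrib_right)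

lemma (in bounded_bilinear) differentiable:
  "f differentiable (at x within S) \<Longrightarrow> g differentiable (at x within S) \<Longrightarrow>
    (\<lambda>x. prod (f x) (g x)) differentiable (at x within S)"
  unfolding differentiable_def using FDERIV by blast

lemma has_vector_derivative_vec_lambda:
  fixes f :: "real \<Rightarrow> 'a::real_normed_vector^'n"
  assumes "\<And>i. ((\<lambda>t. f t $ i) has_vector_derivative f' $ i) F"
  shows "(f has_vector_derivative f') F"
  using assms unfolding has_vector_derivative_def has_derivative_def
  by (auto intro: vec_tendstoI bounded_linear_scaleR_left)

lemma differentiable_vec_lambda:
  fixes f :: "real \<Rightarrow> 'a::real_normed_vector^'n"
  assumes "\<And>i. (\<lambda>t. f t $ i) differentiable F"
  shows "f differentiable F"
proof -
  have "(f has_vector_derivative (\<chi> i. vector_derivative (\<lambda>t. f t $ i) F)) F"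
    using assms by (intro has_vector_derivative_vec_lambda) (simp add: vector_derivative_works[symmetric])
  then show ?thesis using differentiable_def has_vector_derivative_def by blast
qed

lemma differentiable_det:
  fixes A :: "'a::real_normed_vector \<Rightarrow> 'b::real_normed_field^'n^'n"
  assumes "\<And>i j. (\<lambda>t. A t $ i $ j) differentiable (at x within S)"
  shows "(\<lambda>t. det (A t)) differentiable (at x within S)"
proof -
  obtain D where "\<And>i j. ((\<lambda>t. A t $ i $ j) has_derivative D i j) (at x within S)"
    using assms unfolding differentiable_def by metis
  then have "(\<lambda>t. \<Prod>i\<in>UNIV. A t $ i $ \<sigma> i) differentiable (at x within S)" for \<sigma> :: "'n \<Rightarrow> 'n"
    using has_derivative_prod[of UNIV "\<lambda>i t. A t $ i $ \<sigma> i" "\<lambda>i. D i (\<sigma> i)"]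
    unfolding differentiable_def by blast
  then show ?thesis
    unfolding det_def by (intro differentiable_sum differentiable_mult differentiable_const) auto
qed

lemma continuous_on_det:
  fixes A :: "'a::topological_space \<Rightarrow> 'b::real_normed_field^'n^'n"
  assumes "\<And>i j. continuous_on S (\<lambda>t. A t $ i $ j)"
  shows "continuous_on S (\<lambda>t. det (A t))"
  unfolding det_def by (intro continuous_intros assms)

lemma has_vector_derivative_divide_proportional:
  fixes f g :: "real \<Rightarrow> 'a::real_normed_field"
  assumes "(f has_vector_derivative c * f t) (at t)" "(g has_vector_derivative c * g t) (at t)"
    and "g t \<noteq> 0"
  shows "((\<lambda>s. f s / g s) has_vector_derivative 0) (at t)"
proof -
  have "((\<lambda>s. f s / g s) has_derivative
      (\<lambda>h. (h *\<^sub>R (c * f t) * g t - f t * (h *\<^sub>R (c * g t))) / (g t * g t))) (at t)"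
    using assms by (intro has_derivative_divide') (auto simp: has_vector_derivative_def)
  moreover have "(\<lambda>h. (h *\<^sub>R (c * f t) * g t - f t * (h *\<^sub>R (c * g t))) / (g t * g t)) = (\<lambda>h. h *\<^sub>R 0)"
    by (simp add: fun_eq_iff scaleR_conv_of_real algebra_simps)
  ultimately show ?thesis by (simp add: has_vector_derivative_def)
qed

lemma constant_along_segment:
  fixes g :: "'a::real_normed_vector \<Rightarrow> 'b::real_normed_vector"
  assumes "convex S" "x \<in> S" "x + s *\<^sub>R v \<in> S"
    and zero: "\<And>y. y \<in> S \<Longrightarrow> ((\<lambda>t. g (y + t *\<^sub>R v)) has_vector_derivative 0) (at 0)"
  shows "g (x + s *\<^sub>R v) = g x"
proof -
  have in_S: "x + t *\<^sub>R v \<in> S" if t: "t \<in> closed_segment 0 s" for t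
  proof -
    obtain u where "0 \<le> u" "u \<le> 1" "t = u * s"
      using t unfolding in_segment(1) by auto
    then have "x + t *\<^sub>R v = (1 - u) *\<^sub>R x + u *\<^sub>R (x + s *\<^sub>R v)"
      by (simp add: algebra_simps)
    then show ?thesis using convexD[OF assms(1-3), of "1 - u" u] \<open>0 \<le> u\<close> \<open>u \<le> 1\<close> by simp
  qed
  have "((\<lambda>t. g (x + t *\<^sub>R v)) has_vector_derivative 0) (at t)" if "t \<in> closed_segment 0 s" for t
  proof -
    have "((\<lambda>u. g ((x + t *\<^sub>R v) + u *\<^sub>R v)) \<circ> (\<lambda>u. u - t) has_vector_derivative 1 *\<^sub>R 0) (at t)"
      using zero[OF in_S[OF that]]
      by (intro vector_diff_chain_at) (auto intro!: derivative_eq_intros)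
    moreover have "(\<lambda>u. g ((x + t *\<^sub>R v) + u *\<^sub>R v)) \<circ> (\<lambda>u. u - t) = (\<lambda>u. g (x + u *\<^sub>R v))"
      by (simp add: fun_eq_iff algebra_simps)
    ultimately show ?thesis by simp
  qed
  then obtain c where "\<And>t. t \<in> closed_segment 0 s \<Longrightarrow> g (x + t *\<^sub>R v) = c"
    using has_vector_derivative_zero_constant[of "closed_segment 0 s" "\<lambda>t. g (x + t *\<^sub>R v)"]
    by (metis convex_closed_segment has_vector_derivative_at_within)
  from this[of 0] this[of s] show ?thesis by simp
qed

text \<open>Moving first along \<open>e\<^sub>1\<close> and then along \<open>e\<^sub>2\<close> stays inside the ball, so vanishing
  partial derivatives suffice; no joint differentiability is needed.\<close>
lemma constant_on_ball_if_partials_zero: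
  fixes g :: "real^2 \<Rightarrow> 'b::real_normed_vector"
  assumes zero: "\<And>y k. y \<in> ball x r \<Longrightarrow> ((\<lambda>t. g (y + t *\<^sub>R axis k 1)) has_vector_derivative 0) (at 0)"
    and "y \<in> ball x r"
  shows "g y = g x"
proof -
  define s1 s2 where "s1 = y $ 1 - x $ 1" and "s2 = y $ 2 - x $ 2"
  define w where "w = x + s1 *\<^sub>R axis 1 1"
  have "dist x w = \<bar>(y - x) $ 1\<bar>" by (simp add: w_def s1_def dist_norm)
  also have "\<dots> \<le> norm (y - x)" by (rule component_le_norm_cart)
  also have "\<dots> < r" using \<open>y \<in> ball x r\<close> by (simp add: dist_norm norm_minus_commute)
  finally have "w \<in> ball x r" by simp
  then have "x \<in> ball x r" by (simp add: le_less_trans[OF zero_le_dist])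
  have y_eq: "y = w + s2 *\<^sub>R axis 2 1"
    by (simp add: w_def s1_def s2_def vec_eq_iff forall_2 axis_def)
  have "g (w + s2 *\<^sub>R axis 2 1) = g w"
    using \<open>w \<in> ball x r\<close> \<open>y \<in> ball x r\<close>[unfolded y_eq] zero
    by (rule constant_along_segment[OF convex_ball])
  also have "g w = g x"
    using \<open>x \<in> ball x r\<close> \<open>w \<in> ball x r\<close>[unfolded w_def] zero
    unfolding w_def by (rule constant_along_segment[OF convex_ball])
  finally show ?thesis using y_eq by simp
qed

lemma eventually_nhds_line_in_open:
  fixes x v :: "'a::real_normed_vector"
  assumes "open S" "x \<in> S"
  shows "eventually (\<lambda>t. x + t *\<^sub>R v \<in> S) (nhds 0)"
proof -
  have "((\<lambda>t. x + t *\<^sub>R v) \<longlongrightarrow> x + 0 *\<^sub>R v) (nhds 0)"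
    by (intro tendsto_intros filterlim_ident)
  then show ?thesis using assms by (simp add: topological_tendstoD)
qed

lemma has_vector_derivative_in_kernel:
  fixes A :: "real \<Rightarrow> 'a::{real_normed_field,euclidean_space}^'n^'n"
  assumes A: "(A has_vector_derivative V ** A 0) (at 0)" and q: "(q has_vector_derivative q') (at 0)"
    and ker: "eventually (\<lambda>t. A t *v q t = 0) (nhds 0)"
  shows "A 0 *v q' = 0"
proof -
  have "((\<lambda>t. A t *v q t) has_vector_derivative A 0 *v q' + (V ** A 0) *v q 0) (at 0)"
    by (rule bounded_bilinear.has_vector_derivative[OF bounded_bilinear_matrix_vector_mult A q])
  moreover have "((\<lambda>t. A t *v q t) has_vector_derivative 0) (at 0)"
    using ker by (subst has_vector_derivative_cong_ev[of _ _ "\<lambda>_. 0"])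
      (auto elim: eventually_mono dest: eventually_nhds_x_imp_x)
  moreover have "(V ** A 0) *v q 0 = 0"
    using eventually_nhds_x_imp_x[OF ker] by (simp add: matrix_vector_mul_assoc[symmetric])
  ultimately show ?thesis by (metis add.right_neutral vector_derivative_unique_at)
qed

section \<open>Matrix families whose kernel is a line\<close>

locale kernel_line_family =
  fixes \<Omega> :: "(real^2) set" and M :: "real^2 \<Rightarrow> 'a::{real_normed_field,euclidean_space}^'n^'n"
  assumes open_domain: "open \<Omega>"
    and continuous_on_M: "continuous_on \<Omega> M"
    and differentiable_along_axes: "\<And>x k. x \<in> \<Omega> \<Longrightarrow> (\<lambda>t. M (x + t *\<^sub>R axis k 1)) differentiable (at 0)"
    and singular: "\<And>x. x \<in> \<Omega> \<Longrightarrow> det (M x) = 0"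
    and kernel_line: "\<And>x. x \<in> \<Omega> \<Longrightarrow> kernel_dim_le_1 (M x)"
    and partial_factor: "\<And>x k. x \<in> \<Omega> \<Longrightarrow> \<exists>V. partial_d k M x = V ** M x"
begin

lemma has_vector_derivative_along_axis:
  "x \<in> \<Omega> \<Longrightarrow> ((\<lambda>t. M (x + t *\<^sub>R axis k 1)) has_vector_derivative partial_d k M x) (at 0)"
  using differentiable_along_axes by (simp add: partial_d_def vector_derivative_works)

lemma continuous_on_adjugate_col_component:
  "continuous_on \<Omega> (\<lambda>y. adjugate_col (M y) j $ a)"
  unfolding adjugate_col_def vec_lambda_beta
proof (rule continuous_on_det)
  fix r s
  show "continuous_on \<Omega> (\<lambda>y. (\<chi> i. if i = j then axis a 1 else M y $ i) $ r $ s)"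
    by (cases "r = j") (simp_all add: continuous_on_component[OF continuous_on_component[OF continuous_on_M]])
qed

lemma differentiable_adjugate_col_along_axis:
  assumes "x \<in> \<Omega>"
  shows "(\<lambda>t. adjugate_col (M (x + t *\<^sub>R axis k 1)) j) differentiable (at 0)"
proof -
  have "((\<lambda>t. M (x + t *\<^sub>R axis k 1) $ r $ s) has_vector_derivative partial_d k M x $ r $ s) (at 0)"
    for r s
    using bounded_linear.has_vector_derivative[OF bounded_linear_vec_nth,
        OF bounded_linear.has_vector_derivative[OF bounded_linear_vec_nth,
          OF has_vector_derivative_along_axis[OF assms]]] .
  then have entries: "(\<lambda>t. M (x + t *\<^sub>R axis k 1) $ r $ s) differentiable (at 0)" for r s
    by (rule differentiableI_vector)
  show ?thesis
    unfolding adjugate_col_def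
  proof (intro differentiable_vec_lambda, simp only: vec_lambda_beta, rule differentiable_det)
    fix i r s
    show "(\<lambda>t. (\<chi> l. if l = j then axis i 1 else M (x + t *\<^sub>R axis k 1) $ l) $ r $ s) differentiable (at 0)"
      by (cases "r = j") (simp_all add: entries)
  qed
qed

text \<open>Differentiating \<open>M Q = 0\<close> for \<open>Q = adj(M) e\<^sub>j\<close> and using \<open>M\<^sub>,\<^sub>k = V M\<close> gives
  \<open>M Q\<^sub>,\<^sub>k = 0\<close>, so \<open>Q\<^sub>,\<^sub>k\<close> stays in the kernel line spanned by \<open>Q\<close>.\<close>
lemma adjugate_col_derivative_parallel:
  assumes "x \<in> \<Omega>" and Q0: "adjugate_col (M x) j \<noteq> 0"
  shows "\<exists>c. ((\<lambda>t. adjugate_col (M (x + t *\<^sub>R axis k 1)) j)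
              has_vector_derivative c *s adjugate_col (M x) j) (at 0)"
proof -
  define Q where "Q t = adjugate_col (M (x + t *\<^sub>R axis k 1)) j" for t
  define Q' where "Q' = vector_derivative Q (at 0)"
  have "Q differentiable (at 0)"
    unfolding Q_def by (rule differentiable_adjugate_col_along_axis[OF assms(1)])
  then have Q': "(Q has_vector_derivative Q') (at 0)"
    unfolding Q'_def by (simp add: vector_derivative_works[symmetric])
  obtain V where "partial_d k M x = V ** M x" using partial_factor assms(1) by blast
  then have "((\<lambda>t. M (x + t *\<^sub>R axis k 1)) has_vector_derivative V ** M (x + 0 *\<^sub>R axis k 1)) (at 0)"
    using has_vector_derivative_along_axis[OF assms(1), of k] by simp
  moreover have "eventually (\<lambda>t. M (x + t *\<^sub>R axis k 1) *v Q t = 0) (nhds 0)"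
    using eventually_nhds_line_in_open[OF open_domain assms(1), of "axis k 1"]
    by (rule eventually_mono) (simp add: Q_def matrix_vector_mult_adjugate_col singular)
  ultimately have "M x *v Q' = 0"
    using has_vector_derivative_in_kernel[OF _ Q'] by fastforce
  moreover have "M x *v adjugate_col (M x) j = 0"
    by (simp add: matrix_vector_mult_adjugate_col singular assms(1))
  ultimately obtain c where "Q' = c *s adjugate_col (M x) j"
    using kernel_line[OF assms(1)] Q0 unfolding kernel_dim_le_1_def by blast
  then show ?thesis using Q' unfolding Q_def by blast
qed

text \<open>The ratios \<open>Q\<^sub>i / Q\<^sub>a\<close> of the entries of \<open>Q = adj(M) e\<^sub>j\<close> have vanishing partial
  derivatives.\<close>
lemma adjugate_col_proportional_on_ball:
  assumes "ball x r \<subseteq> \<Omega>" and Qa: "\<And>y. y \<in> ball x r \<Longrightarrow> adjugate_col (M y) j $ a \<noteq> 0"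
    and "y \<in> ball x r"
  shows "adjugate_col (M y) j = (adjugate_col (M y) j $ a / adjugate_col (M x) j $ a) *s adjugate_col (M x) j"
proof -
  define Q where "Q y = adjugate_col (M y) j" for y
  have ratio_const: "Q y $ i / Q y $ a = Q x $ i / Q x $ a" for i
  proof (rule constant_on_ball_if_partials_zero[OF _ \<open>y \<in> ball x r\<close>])
    fix z k assume "z \<in> ball x r"
    then have "z \<in> \<Omega>" "Q z $ a \<noteq> 0" using assms(1) Qa unfolding Q_def by auto
    then obtain c where "((\<lambda>t. Q (z + t *\<^sub>R axis k 1)) has_vector_derivative c *s Q z) (at 0)"
      using adjugate_col_derivative_parallel[of z j k] unfolding Q_def by (auto simp: vec_eq_iff)
    from bounded_linear.has_vector_derivative[OF bounded_linear_vec_nth this]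
    have "((\<lambda>t. Q (z + t *\<^sub>R axis k 1) $ l) has_vector_derivative c * Q (z + 0 *\<^sub>R axis k 1) $ l) (at 0)" for l
      by simp
    then show "((\<lambda>t. Q (z + t *\<^sub>R axis k 1) $ i / Q (z + t *\<^sub>R axis k 1) $ a) has_vector_derivative 0) (at 0)"
      using \<open>Q z $ a \<noteq> 0\<close> by (intro has_vector_derivative_divide_proportional) auto
  qed
  have "x \<in> ball x r" using \<open>y \<in> ball x r\<close> by (simp add: le_less_trans[OF zero_le_dist])
  then show ?thesis
    using ratio_const Qa[OF \<open>y \<in> ball x r\<close>] Qa[OF \<open>x \<in> ball x r\<close>] unfolding Q_def
    by (simp add: vec_eq_iff field_simps)
qed

lemma kernel_locally_constant:
  assumes "x \<in> \<Omega>"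
  shows "eventually (\<lambda>y. {p. M x *v p = 0} = {p. M y *v p = 0}) (at x within \<Omega>)"
proof -
  obtain j a where "adjugate_col (M x) j $ a \<noteq> 0"
    using adjugate_col_nonzero singular kernel_line assms by blast
  define Q where "Q y = adjugate_col (M y) j" for y
  obtain e where "e > 0" and e: "\<And>y. dist x y < e \<Longrightarrow> Q y $ a \<noteq> 0"
    using continuous_on_open_avoid[OF continuous_on_adjugate_col_component open_domain assms]
      \<open>adjugate_col (M x) j $ a \<noteq> 0\<close> unfolding Q_def by metis
  obtain r0 where "r0 > 0" "ball x r0 \<subseteq> \<Omega>"
    using open_domain assms open_contains_ball by blast
  define r where "r = min e r0"
  have "r > 0" "ball x r \<subseteq> \<Omega>" and Qa: "\<And>y. y \<in> ball x r \<Longrightarrow> Q y $ a \<noteq> 0"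
    using \<open>e > 0\<close> \<open>r0 > 0\<close> \<open>ball x r0 \<subseteq> \<Omega>\<close> e by (auto simp: r_def)
  have Q_ker: "M z *v Q z = 0" if "z \<in> \<Omega>" for z
    using that by (simp add: Q_def matrix_vector_mult_adjugate_col singular)
  have "{p. M x *v p = 0} = {p. M y *v p = 0}" if "y \<in> ball x r" for y
  proof -
    have "y \<in> \<Omega>" "x \<in> ball x r" using that \<open>ball x r \<subseteq> \<Omega>\<close> \<open>r > 0\<close> by auto
    have "(Q y $ a / Q x $ a) *s (M y *v Q x) = 0"
      using adjugate_col_proportional_on_ball[OF \<open>ball x r \<subseteq> \<Omega>\<close> Qa[unfolded Q_def] that]
        Q_ker[OF \<open>y \<in> \<Omega>\<close>] unfolding Q_def by (metis vector_scalar_commute)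
    then have "M y *v Q x = 0"
      using Qa[OF that] Qa[OF \<open>x \<in> ball x r\<close>] by (simp add: vec_eq_iff)
    moreover have "Q x \<noteq> 0" using Qa[OF \<open>x \<in> ball x r\<close>] by auto
    ultimately show ?thesis
      using kernel_eq_line[OF kernel_line Q_ker] kernel_eq_line[OF kernel_line[OF \<open>y \<in> \<Omega>\<close>]] assms
      by simp
  qed
  then show ?thesis
    unfolding eventually_at using \<open>r > 0\<close> by (metis dist_commute mem_ball)
qed

lemma common_kernel_vector:
  assumes "connected \<Omega>"
  shows "\<exists>p. p \<noteq> 0 \<and> (\<forall>x\<in>\<Omega>. M x *v p = 0 \<and> (\<forall>k. partial_d k M x *v p = 0))"
proof (cases "\<Omega> = {}")
  case True
  then show ?thesis by (intro exI[of _ "axis undefined 1"]) (simp add: axis_eq_0_iff)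
next
  case False
  then obtain x0 where "x0 \<in> \<Omega>" by blast
  then obtain p where "p \<noteq> 0" "M x0 *v p = 0"
    using singular det_eq_0_iff_nontrivial_kernel by blast
  have p_ker: "M x *v p = 0" if "x \<in> \<Omega>" for x
    using connected_local_const[OF assms \<open>x0 \<in> \<Omega>\<close> that, of "\<lambda>x. {p. M x *v p = 0}"]
      kernel_locally_constant \<open>M x0 *v p = 0\<close> by blast
  have "partial_d k M x *v p = 0" if "x \<in> \<Omega>" for x k
    using partial_factor[OF that, of k] p_ker[OF that] by (auto simp flip: matrix_vector_mul_assoc)
  then show ?thesis using \<open>p \<noteq> 0\<close> p_ker by blast
qed

end

lemma smooth_onD:
  assumes "smooth_on \<Omega> f"
  shows "continuous_on \<Omega> f"
    and "\<And>x k. x \<in> \<Omega> \<Longrightarrow> (\<lambda>t. f (x + t *\<^sub>R axis k 1)) differentiable (at 0)"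
  using assms unfolding smooth_on_def by (metis iter_partial.simps(1))+

lemma mat_poly_eq_sum: "mat_poly N C l = (\<Sum>j\<le>N. C j ** mat (l ^ j))"
  by (simp add: vec_eq_iff mat_poly_def sum_component matrix_matrix_mult_def mat_def
      if_distrib[of "\<lambda>x. _ * x"] cong: if_cong)

lemma continuous_on_mat_poly_mult:
  assumes "\<And>j. j \<le> N \<Longrightarrow> continuous_on S (C j)" and "continuous_on S P"
  shows "continuous_on S (\<lambda>y. mat_poly N (\<lambda>j. C j y) l ** P y)"
  unfolding mat_poly_eq_sum using assms
  by (intro bounded_bilinear.continuous_on[OF bounded_bilinear_matrix_matrix_mult]
      continuous_on_sum continuous_on_const) auto

lemma differentiable_mat_poly_mult:
  assumes "\<And>j. j \<le> N \<Longrightarrow> C j differentiable (at x within S)" and "P differentiable (at x within S)"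
  shows "(\<lambda>y. mat_poly N (\<lambda>j. C j y) l ** P y) differentiable (at x within S)"
  unfolding mat_poly_eq_sum using assms
  by (intro bounded_bilinear.differentiable[OF bounded_bilinear_matrix_matrix_mult]
      differentiable_sum ballI differentiable_const) auto

lemma field_differentiable_mat_poly_entry:
  "(\<lambda>l. mat_poly N C l $ i $ j) field_differentiable (at z)"
  unfolding mat_poly_def by (auto intro!: derivative_intros)

theorem mainTheorem2:
  fixes \<Omega> :: "(real^2) set"
    and \<Phi> :: "real^2 \<Rightarrow> complex \<Rightarrow> complex^'n^'n"
    and C :: "nat \<Rightarrow> real^2 \<Rightarrow> complex^'n^'n"
    and N :: nat
    and U :: "2 \<Rightarrow> real^2 \<Rightarrow> complex \<Rightarrow> complex^'n^'n"
    and lam_i :: complex and r :: real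
  defines "T \<equiv> (\<lambda>x l. mat_poly N (\<lambda>j. C j x) l)"
  defines "\<Phi>t \<equiv> (\<lambda>x l. T x l ** \<Phi> x l)"
  assumes "open \<Omega>" and "connected \<Omega>"
    and "r > 0"
    and \<Phi>_smooth: "\<forall>l\<in>ball lam_i r. smooth_on \<Omega> (\<lambda>x. \<Phi> x l)"
    and \<Phi>_hol: "\<forall>x\<in>\<Omega>. mat_holomorphic_on (\<Phi> x) (ball lam_i r)"
    and \<Phi>_inv: "\<forall>x\<in>\<Omega>. \<forall>l\<in>ball lam_i r. invertible (\<Phi> x l)"
    and C_smooth: "\<forall>j\<le>N. smooth_on \<Omega> (C j)"
    and simple_zero: "\<forall>x\<in>\<Omega>. det (T x lam_i) = 0 \<and> deriv (\<lambda>l. det (T x l)) lam_i \<noteq> 0"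
    and U_hol: "\<forall>k. \<forall>x\<in>\<Omega>. mat_holomorphic_on (U k x) (ball lam_i r)"
    and U_eq: "\<forall>k. \<forall>x\<in>\<Omega>. \<forall>l\<in>ball lam_i r.
                 partial_d k (\<lambda>y. \<Phi>t y l) x = U k x l ** \<Phi>t x l"
  shows "\<exists>p :: complex^'n. p \<noteq> 0 \<and>
           (\<forall>x\<in>\<Omega>. \<Phi>t x lam_i *v p = 0 \<and> (\<forall>k. partial_d k (\<lambda>y. \<Phi>t y lam_i) x *v p = 0))"
proof -
  \<comment> \<open>Only \<open>\<lambda> = \<lambda>\<^sub>i\<close> enters.\<close>
  have "lam_i \<in> ball lam_i r" using \<open>r > 0\<close> by simp
  then have \<Phi>_lam: "smooth_on \<Omega> (\<lambda>x. \<Phi> x lam_i)" using \<Phi>_smooth by blast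
  interpret kernel_line_family \<Omega> "\<lambda>y. \<Phi>t y lam_i"
  proof
    show "continuous_on \<Omega> (\<lambda>y. \<Phi>t y lam_i)"
      unfolding \<Phi>t_def T_def using C_smooth smooth_onD(1)[OF \<Phi>_lam]
      by (intro continuous_on_mat_poly_mult) (auto dest: smooth_onD(1))
    show "(\<lambda>t. \<Phi>t (x + t *\<^sub>R axis k 1) lam_i) differentiable (at 0)" if "x \<in> \<Omega>" for x k
      unfolding \<Phi>t_def T_def using C_smooth smooth_onD(2)[OF \<Phi>_lam that]
      by (intro differentiable_mat_poly_mult) (auto dest: smooth_onD(2)[OF _ that])
    show "det (\<Phi>t x lam_i) = 0" if "x \<in> \<Omega>" for x
      using simple_zero that by (simp add: \<Phi>t_def det_mul)
    show "kernel_dim_le_1 (\<Phi>t x lam_i)" if "x \<in> \<Omega>" for x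
      using simple_zero \<Phi>_inv \<open>lam_i \<in> ball lam_i r\<close> that unfolding \<Phi>t_def T_def
      by (intro kernel_dim_le_1_mult_invertible kernel_dim_le_1_if_simple_zero
          field_differentiable_mat_poly_entry) auto
    show "\<exists>V. partial_d k (\<lambda>y. \<Phi>t y lam_i) x = V ** \<Phi>t x lam_i" if "x \<in> \<Omega>" for x k
      using U_eq \<open>lam_i \<in> ball lam_i r\<close> that by blast
  qed fact
  show ?thesis using common_kernel_vector[OF \<open>connected \<Omega>\<close>] .
qed

end
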